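(* Let $P^0_0,\dots,P^0_3\in\{z=0\}$ and $P^1_0,\dots,P^1_3\in\{z=1\}$ be points in $\mathbb{R}^3$, and for $u\in[0,1]$ set $P^u_j=(1-u)P^0_j+uP^1_j$ (viewed as points of the plane $\{z=u\}\cong\mathbb{R}^2$). Assume $$J:=\min_{0\le j\le3,\;u\in[0,1]}\bigl[\overrightarrow{P^u_jP^u_{j+1}},\overrightarrow{P^u_jP^u_{j-1}}\bigr]>0$$ (indices mod $4$, $[v,w]:=\det(v,w)$ for planar vectors). For $u\in\{0,1\}$ and $s,t\in[0,1]$ let $v^u(t)=(1-t)\overrightarrow{P^u_0P^u_1}+t\overrightarrow{P^u_3P^u_2}$, $w^u(s)=(1-s)\overrightarrow{P^u_0P^u_3}+s\overrightarrow{P^u_1P^u_2}$, $Q^u(s,t)=P^u_0+s\,v^u(0)+t\,w^u(s)$. Then the map $B\colon[0,1]^3\to\mathbb{R}^3$, $B(s,t,u)=(1-u)Q^0(s,t)+uQ^1(s,t)$, is bi-Lipschitz onto its image. *)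

theory Defs
  imports "HOL-Analysis.Analysis"
begin

type_synonym pt3 = "real \<times> real \<times> real"

definition xc :: "pt3 \<Rightarrow> real" where "xc p = fst p"
definition yc :: "pt3 \<Rightarrow> real" where "yc p = fst (snd p)"
definition zc :: "pt3 \<Rightarrow> real" where "zc p = snd (snd p)"

text \<open>Planar determinant [v,w] of the (x,y)-parts of two vectors (the points
  lie in a horizontal plane z = u, identified with R^2).\<close>
definition pdet :: "pt3 \<Rightarrow> pt3 \<Rightarrow> real" where
  "pdet v w = xc v * yc w - yc v * xc w"

definition Pu :: "(nat \<Rightarrow> pt3) \<Rightarrow> (nat \<Rightarrow> pt3) \<Rightarrow> real \<Rightarrow> nat \<Rightarrow> pt3" where
  "Pu P0 P1 u j = (1 - u) *\<^sub>R P0 j + u *\<^sub>R P1 j"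

definition Jmin :: "(nat \<Rightarrow> pt3) \<Rightarrow> (nat \<Rightarrow> pt3) \<Rightarrow> real" where
  "Jmin P0 P1 = Inf {pdet (Pu P0 P1 u ((j + 1) mod 4) - Pu P0 P1 u j)
                          (Pu P0 P1 u ((j + 3) mod 4) - Pu P0 P1 u j)
                     | j u. j \<le> 3 \<and> u \<in> {0..1}}"

definition vq :: "(nat \<Rightarrow> pt3) \<Rightarrow> real \<Rightarrow> pt3" where
  "vq P t = (1 - t) *\<^sub>R (P 1 - P 0) + t *\<^sub>R (P 2 - P 3)"
definition wq :: "(nat \<Rightarrow> pt3) \<Rightarrow> real \<Rightarrow> pt3" where
  "wq P s = (1 - s) *\<^sub>R (P 3 - P 0) + s *\<^sub>R (P 2 - P 1)"
definition Qq :: "(nat \<Rightarrow> pt3) \<Rightarrow> real \<Rightarrow> real \<Rightarrow> pt3" where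
  "Qq P s t = P 0 + s *\<^sub>R vq P 0 + t *\<^sub>R wq P s"

definition Bmap :: "(nat \<Rightarrow> pt3) \<Rightarrow> (nat \<Rightarrow> pt3) \<Rightarrow> pt3 \<Rightarrow> pt3" where
  "Bmap P0 P1 x = (case x of (s, t, u) \<Rightarrow> (1 - u) *\<^sub>R Qq P0 s t + u *\<^sub>R Qq P1 s t)"

definition bi_lipschitz_on :: "'a::metric_space set \<Rightarrow> ('a \<Rightarrow> 'b::metric_space) \<Rightarrow> bool" where
  "bi_lipschitz_on S f \<longleftrightarrow> (\<exists>L>0. \<forall>x\<in>S. \<forall>y\<in>S.
      dist x y \<le> L * dist (f x) (f y) \<and> dist (f x) (f y) \<le> L * dist x y)"

end

theory Submission imports Defs begin

text \<open>Write \<open>B(s,t,u) - B(s',t',u') = (s-s') V + (t-t') W + (u-u') R\<close> with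
  \<open>V = v\<^sup>u(t)\<close>, \<open>W = w\<^sup>u(s')\<close> horizontal and \<open>R = Q\<^sup>1(s',t') - Q\<^sup>0(s',t')\<close> of height 1.
  By compactness these vectors are uniformly bounded, which gives the Lipschitz bound.
  Conversely, \<open>[V,W]\<close> is a bilinear interpolation of the four corner determinants of
  the quadrilateral \<open>P\<^sup>u\<close>, hence at least \<open>J > 0\<close>; the height of the difference
  recovers \<open>u - u'\<close>, and Cramer's rule in the plane recovers \<open>s - s'\<close> and \<open>t - t'\<close>
  with constants depending only on the bounds and on \<open>J\<close>.\<close>

lemma coord_simps [simp]:
  "xc (a + b) = xc a + xc b" "yc (a + b) = yc a + yc b" "zc (a + b) = zc a + zc b"
  "xc (a - b) = xc a - xc b" "yc (a - b) = yc a - yc b" "zc (a - b) = zc a - zc b"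
  "xc (c *\<^sub>R a) = c * xc a" "yc (c *\<^sub>R a) = c * yc a" "zc (c *\<^sub>R a) = c * zc a"
  by (auto simp: xc_def yc_def zc_def)

lemma abs_coord_le_norm: "\<bar>xc p\<bar> \<le> norm p" "\<bar>yc p\<bar> \<le> norm p" "\<bar>zc p\<bar> \<le> norm p"
proof -
  obtain a b c where p: "p = (a, b, c)" by (cases p) auto
  show "\<bar>xc p\<bar> \<le> norm p" using norm_fst_le[of a "(b, c)"] by (simp add: p xc_def)
  show "\<bar>yc p\<bar> \<le> norm p" using norm_fst_le[of b c] norm_snd_le[of "(b, c)" a] by (simp add: p yc_def)
  show "\<bar>zc p\<bar> \<le> norm p" using norm_snd_le[of c b] norm_snd_le[of "(b, c)" a] by (simp add: p zc_def)
qed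

lemma dist_triple_l1_bounds:
  fixes s t u s' t' u' :: real
  shows "dist (s, t, u) (s', t', u') \<le> \<bar>s - s'\<bar> + \<bar>t - t'\<bar> + \<bar>u - u'\<bar>"
    and "\<bar>s - s'\<bar> + \<bar>t - t'\<bar> + \<bar>u - u'\<bar> \<le> 3 * dist (s, t, u) (s', t', u')"
proof -
  let ?d = "(s - s', t - t', u - u')"
  have d: "dist (s, t, u) (s', t', u') = norm ?d" by (simp add: dist_norm)
  show "dist (s, t, u) (s', t', u') \<le> \<bar>s - s'\<bar> + \<bar>t - t'\<bar> + \<bar>u - u'\<bar>"
    unfolding d using norm_Pair_le[of "s - s'" "(t - t', u - u')"] norm_Pair_le[of "t - t'" "u - u'"]
    by simp
  show "\<bar>s - s'\<bar> + \<bar>t - t'\<bar> + \<bar>u - u'\<bar> \<le> 3 * dist (s, t, u) (s', t', u')"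
    unfolding d using abs_coord_le_norm[of ?d] by (simp add: xc_def yc_def zc_def)
qed

lemma bi_lipschitz_onI:
  assumes "0 < A" "0 \<le> B"
    and "\<And>x y. x \<in> S \<Longrightarrow> y \<in> S \<Longrightarrow> dist x y \<le> A * dist (f x) (f y)"
    and "\<And>x y. x \<in> S \<Longrightarrow> y \<in> S \<Longrightarrow> dist (f x) (f y) \<le> B * dist x y"
  shows "bi_lipschitz_on S f"
  unfolding bi_lipschitz_on_def
proof (intro exI[of _ "A + B"] conjI ballI)
  show "0 < A + B" using assms(1,2) by simp
  fix x y assume "x \<in> S" "y \<in> S"
  have "dist x y \<le> A * dist (f x) (f y)" using assms(3) \<open>x \<in> S\<close> \<open>y \<in> S\<close> .
  also have "\<dots> \<le> (A + B) * dist (f x) (f y)" using assms(2) by (simp add: mult_right_mono)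
  finally show "dist x y \<le> (A + B) * dist (f x) (f y)" .
  have "dist (f x) (f y) \<le> B * dist x y" using assms(4) \<open>x \<in> S\<close> \<open>y \<in> S\<close> .
  also have "\<dots> \<le> (A + B) * dist x y" using assms(1) by (simp add: mult_right_mono)
  finally show "dist (f x) (f y) \<le> (A + B) * dist x y" .
qed

lemma abs_pdet_le: "\<bar>pdet a b\<bar> \<le> 2 * norm a * norm b"
proof -
  have "\<bar>pdet a b\<bar> \<le> \<bar>xc a\<bar> * \<bar>yc b\<bar> + \<bar>yc a\<bar> * \<bar>xc b\<bar>"
    unfolding pdet_def by (metis abs_mult abs_triangle_ineq4)
  also have "\<dots> \<le> norm a * norm b + norm a * norm b"
    by (intro add_mono mult_mono abs_coord_le_norm) auto
  finally show ?thesis by simp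
qed

lemma pdet_combination_left:
  "pdet (a *\<^sub>R V + b *\<^sub>R W + c *\<^sub>R R) W = a * pdet V W + c * pdet R W"
  unfolding pdet_def coord_simps by algebra

lemma pdet_combination_right:
  "pdet V (a *\<^sub>R V + b *\<^sub>R W + c *\<^sub>R R) = b * pdet V W + c * pdet V R"
  unfolding pdet_def coord_simps by algebra

lemma norm_combination_le:
  fixes V W R :: "'a::real_normed_vector"
  assumes "norm V \<le> M" "norm W \<le> M" "norm R \<le> M"
  shows "norm (a *\<^sub>R V + b *\<^sub>R W + c *\<^sub>R R) \<le> M * (\<bar>a\<bar> + \<bar>b\<bar> + \<bar>c\<bar>)"
proof -
  have "norm (a *\<^sub>R V + b *\<^sub>R W + c *\<^sub>R R) \<le> \<bar>a\<bar> * norm V + \<bar>b\<bar> * norm W + \<bar>c\<bar> * norm R"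
    using norm_triangle_ineq[of "a *\<^sub>R V + b *\<^sub>R W" "c *\<^sub>R R"]
      norm_triangle_ineq[of "a *\<^sub>R V" "b *\<^sub>R W"] by simp
  also have "\<dots> \<le> \<bar>a\<bar> * M + \<bar>b\<bar> * M + \<bar>c\<bar> * M"
    using assms by (intro add_mono mult_left_mono) auto
  finally show ?thesis by (simp add: algebra_simps)
qed

lemma pdet_antisym: "pdet a b = - pdet b a"
  unfolding pdet_def by simp

lemma abs_pdet_diff_le:
  assumes "norm D \<le> n" "\<bar>c\<bar> \<le> n" "norm W \<le> M" "norm R \<le> M"
  shows "\<bar>pdet D W - c * pdet R W\<bar> \<le> 2 * M * (1 + M) * n"
proof -
  have n: "0 \<le> n" using assms(1) norm_ge_zero order_trans by blast
  have M: "0 \<le> M" using assms(3) norm_ge_zero order_trans by blast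
  have "\<bar>pdet D W - c * pdet R W\<bar> \<le> \<bar>pdet D W\<bar> + \<bar>c\<bar> * \<bar>pdet R W\<bar>"
    using abs_triangle_ineq4[of "pdet D W" "c * pdet R W"] by (simp add: abs_mult)
  also have "\<dots> \<le> 2 * n * M + n * (2 * M * M)"
  proof (intro add_mono mult_mono)
    show "\<bar>pdet D W\<bar> \<le> 2 * n * M"
      using abs_pdet_le[of D W] mult_mono[OF assms(1,3) n norm_ge_zero] by simp
    show "\<bar>pdet R W\<bar> \<le> 2 * M * M"
      using abs_pdet_le[of R W] mult_mono[OF assms(4,3) M norm_ge_zero] by simp
  qed (use assms n M in auto)
  finally show ?thesis by (simp add: algebra_simps)
qed

text \<open>The height of the combination is \<open>c\<close>; then \<open>a\<close> and \<open>b\<close> follow by Cramer's rule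
  in the horizontal plane.\<close>
lemma frame_coeffs_le:
  fixes V W R :: pt3
  assumes "zc V = 0" "zc W = 0" "zc R = 1"
    and "norm V \<le> M" "norm W \<le> M" "norm R \<le> M"
    and "0 < \<delta>" "\<delta> \<le> pdet V W"
  shows "\<bar>a\<bar> + \<bar>b\<bar> + \<bar>c\<bar> \<le> (4 * M * (1 + M) / \<delta> + 1) * norm (a *\<^sub>R V + b *\<^sub>R W + c *\<^sub>R R)"
proof -
  define D where "D = a *\<^sub>R V + b *\<^sub>R W + c *\<^sub>R R"
  have c: "\<bar>c\<bar> \<le> norm D"
    using abs_coord_le_norm(3)[of D] assms(1-3) by (simp add: D_def)
  have "\<bar>a\<bar> * \<delta> \<le> \<bar>a * pdet V W\<bar>"
    using assms(7,8) by (simp add: abs_mult mult_left_mono)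
  also have "\<dots> = \<bar>pdet D W - c * pdet R W\<bar>"
    by (simp add: D_def pdet_combination_left)
  also have "\<dots> \<le> 2 * M * (1 + M) * norm D"
    using c assms(5,6) by (intro abs_pdet_diff_le) auto
  finally have a: "\<bar>a\<bar> \<le> 2 * M * (1 + M) / \<delta> * norm D"
    using assms(7) by (simp add: field_simps)
  have "\<bar>b\<bar> * \<delta> \<le> \<bar>b * pdet V W\<bar>"
    using assms(7,8) by (simp add: abs_mult mult_left_mono)
  also have "\<dots> = \<bar>pdet D V - c * pdet R V\<bar>"
    using pdet_combination_right[of V a b W c R] pdet_antisym[of V D] pdet_antisym[of V R]
    by (simp add: D_def abs_minus_commute)
  also have "\<dots> \<le> 2 * M * (1 + M) * norm D"
    using c assms(4,6) by (intro abs_pdet_diff_le) auto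
  finally have b: "\<bar>b\<bar> \<le> 2 * M * (1 + M) / \<delta> * norm D"
    using assms(7) by (simp add: field_simps)
  have "\<bar>a\<bar> + \<bar>b\<bar> + \<bar>c\<bar> \<le> 2 * (2 * M * (1 + M) / \<delta> * norm D) + norm D"
    using a b c by linarith
  also have "\<dots> = (4 * M * (1 + M) / \<delta> + 1) * norm D"
    by (simp add: algebra_simps)
  finally show ?thesis unfolding D_def .
qed

lemma bilinear_interpolation_ge:
  fixes a b c d J s t :: real
  assumes "J \<le> a" "J \<le> b" "J \<le> c" "J \<le> d" "s \<in> {0..1}" "t \<in> {0..1}"
  shows "J \<le> (1 - t) * (1 - s) * a + (1 - t) * s * b + t * s * c + t * (1 - s) * d"
proof -
  have "(1 - t) * (1 - s) * J \<le> (1 - t) * (1 - s) * a" using assms by (intro mult_left_mono) auto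
  moreover have "(1 - t) * s * J \<le> (1 - t) * s * b" using assms by (intro mult_left_mono) auto
  moreover have "t * s * J \<le> t * s * c" using assms by (intro mult_left_mono) auto
  moreover have "t * (1 - s) * J \<le> t * (1 - s) * d" using assms by (intro mult_left_mono) auto
  moreover have "J = (1 - t) * (1 - s) * J + (1 - t) * s * J + t * s * J + t * (1 - s) * J"
    by algebra
  ultimately show ?thesis by linarith
qed

lemma pdet_vq_wq:
  "pdet (vq P t) (wq P s) = (1 - t) * (1 - s) * pdet (P 1 - P 0) (P 3 - P 0)
     + (1 - t) * s * pdet (P 2 - P 1) (P 0 - P 1) + t * s * pdet (P 3 - P 2) (P 1 - P 2)
     + t * (1 - s) * pdet (P 0 - P 3) (P 2 - P 3)"
  unfolding vq_def wq_def pdet_def coord_simps by (simp add: algebra_simps)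

lemma Jmin_le_corner_pdet:
  assumes "u \<in> {0..1}" "j \<le> 3"
  shows "Jmin P0 P1 \<le> pdet (Pu P0 P1 u ((j + 1) mod 4) - Pu P0 P1 u j)
                          (Pu P0 P1 u ((j + 3) mod 4) - Pu P0 P1 u j)"
proof -
  define g where "g j u = pdet (Pu P0 P1 u ((j + 1) mod 4) - Pu P0 P1 u j)
                          (Pu P0 P1 u ((j + 3) mod 4) - Pu P0 P1 u j)" for j u
  have "continuous_on {0..1} (g j)" for j
    unfolding g_def pdet_def xc_def yc_def Pu_def by (intro continuous_intros)
  then have "bounded (\<Union>j\<le>3. g j ` {0..1})"
    by (intro bounded_UN ballI compact_imp_bounded compact_continuous_image) auto
  moreover have "{g j u | j u. j \<le> 3 \<and> u \<in> {0..1}} = (\<Union>j\<le>3. g j ` {0..1})"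
    by blast
  ultimately have "bdd_below {g j u | j u. j \<le> 3 \<and> u \<in> {0..1}}"
    by (simp add: bounded_imp_bdd_below)
  then show ?thesis
    unfolding Jmin_def g_def[symmetric] by (rule cInf_lower[rotated]) (use assms in blast)
qed

lemma Jmin_le_pdet_vq_wq:
  assumes "u \<in> {0..1}" "s \<in> {0..1}" "t \<in> {0..1}"
  shows "Jmin P0 P1 \<le> pdet (vq (Pu P0 P1 u) t) (wq (Pu P0 P1 u) s)"
  unfolding pdet_vq_wq
proof (rule bilinear_interpolation_ge)
  show "Jmin P0 P1 \<le> pdet (Pu P0 P1 u 1 - Pu P0 P1 u 0) (Pu P0 P1 u 3 - Pu P0 P1 u 0)"
    using Jmin_le_corner_pdet[OF assms(1), of 0] by simp
  show "Jmin P0 P1 \<le> pdet (Pu P0 P1 u 2 - Pu P0 P1 u 1) (Pu P0 P1 u 0 - Pu P0 P1 u 1)"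
    using Jmin_le_corner_pdet[OF assms(1), of 1] by (simp add: numeral_2_eq_2)
  show "Jmin P0 P1 \<le> pdet (Pu P0 P1 u 3 - Pu P0 P1 u 2) (Pu P0 P1 u 1 - Pu P0 P1 u 2)"
    using Jmin_le_corner_pdet[OF assms(1), of 2] by simp
  show "Jmin P0 P1 \<le> pdet (Pu P0 P1 u 0 - Pu P0 P1 u 3) (Pu P0 P1 u 2 - Pu P0 P1 u 3)"
    using Jmin_le_corner_pdet[OF assms(1), of 3] by simp
qed (use assms in auto)

lemma Bmap_diff:
  "Bmap P0 P1 (s, t, u) - Bmap P0 P1 (s', t', u') =
    (s - s') *\<^sub>R vq (Pu P0 P1 u) t + (t - t') *\<^sub>R wq (Pu P0 P1 u) s'
    + (u - u') *\<^sub>R (Qq P1 s' t' - Qq P0 s' t')"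
  by (simp add: Bmap_def Qq_def vq_def wq_def Pu_def algebra_simps)

lemma zc_frame:
  assumes "\<forall>j\<le>3. zc (P0 j) = 0" "\<forall>j\<le>3. zc (P1 j) = 1"
  shows "zc (vq (Pu P0 P1 u) t) = 0" "zc (wq (Pu P0 P1 u) s) = 0"
    "zc (Qq P1 s t - Qq P0 s t) = 1"
  using assms by (simp_all add: vq_def wq_def Qq_def Pu_def)

definition frame_bound :: "(nat \<Rightarrow> pt3) \<Rightarrow> (nat \<Rightarrow> pt3) \<Rightarrow> real \<Rightarrow> bool" where
  "frame_bound P0 P1 M \<longleftrightarrow> (\<forall>s\<in>{0..1}. \<forall>t\<in>{0..1}. \<forall>u\<in>{0..1}.
     norm (vq (Pu P0 P1 u) t) \<le> M \<and> norm (wq (Pu P0 P1 u) s) \<le> M \<and>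
     norm (Qq P1 s t - Qq P0 s t) \<le> M)"

lemma frame_bound_exists: "\<exists>M. frame_bound P0 P1 M"
proof -
  have square: "compact ({0..1} \<times> {0..1} :: (real \<times> real) set)"
    by (intro compact_Times compact_Icc)
  have "continuous_on ({0..1} \<times> {0..1}) (\<lambda>p. vq (Pu P0 P1 (snd p)) (fst p))"
    unfolding vq_def Pu_def by (intro continuous_intros)
  then obtain A where A: "\<And>p. p \<in> {0..1} \<times> {0..1} \<Longrightarrow> norm (vq (Pu P0 P1 (snd p)) (fst p)) \<le> A"
    using continuous_on_compact_bound[OF square] by blast
  have "continuous_on ({0..1} \<times> {0..1}) (\<lambda>p. wq (Pu P0 P1 (snd p)) (fst p))"
    unfolding wq_def Pu_def by (intro continuous_intros)
  then obtain B where B: "\<And>p. p \<in> {0..1} \<times> {0..1} \<Longrightarrow> norm (wq (Pu P0 P1 (snd p)) (fst p)) \<le> B"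
    using continuous_on_compact_bound[OF square] by blast
  have "continuous_on ({0..1} \<times> {0..1}) (\<lambda>p. Qq P1 (fst p) (snd p) - Qq P0 (fst p) (snd p))"
    unfolding Qq_def vq_def wq_def by (intro continuous_intros)
  then obtain C where C: "\<And>p. p \<in> {0..1} \<times> {0..1} \<Longrightarrow>
      norm (Qq P1 (fst p) (snd p) - Qq P0 (fst p) (snd p)) \<le> C"
    using continuous_on_compact_bound[OF square] by blast
  have "frame_bound P0 P1 (max A (max B C))"
    unfolding frame_bound_def
  proof (intro ballI conjI)
    fix s t u :: real assume "s \<in> {0..1}" "t \<in> {0..1}" "u \<in> {0..1}"
    then have "(t, u) \<in> {0..1} \<times> {0..1}" "(s, u) \<in> {0..1} \<times> {0..1}" "(s, t) \<in> {0..1} \<times> {0..1}"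
      by simp_all
    then show "norm (vq (Pu P0 P1 u) t) \<le> max A (max B C)"
      and "norm (wq (Pu P0 P1 u) s) \<le> max A (max B C)"
      and "norm (Qq P1 s t - Qq P0 s t) \<le> max A (max B C)"
      using A[of "(t, u)"] B[of "(s, u)"] C[of "(s, t)"] by (simp_all add: le_max_iff_disj)
  qed
  then show ?thesis ..
qed

lemma frame_boundD:
  assumes "frame_bound P0 P1 M" "s \<in> {0..1}" "t \<in> {0..1}" "u \<in> {0..1}"
  shows "norm (vq (Pu P0 P1 u) t) \<le> M" "norm (wq (Pu P0 P1 u) s) \<le> M"
    "norm (Qq P1 s t - Qq P0 s t) \<le> M"
  using assms unfolding frame_bound_def by blast+

lemma frame_bound_nonneg:
  assumes "frame_bound P0 P1 M"
  shows "0 \<le> M"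
proof -
  have "norm (vq (Pu P0 P1 0) 0) \<le> M" using frame_boundD(1)[OF assms, of 0] by simp
  then show ?thesis by (rule order_trans[OF norm_ge_zero])
qed

lemma Bmap_lipschitz:
  assumes "frame_bound P0 P1 M"
    and "x \<in> {0..1} \<times> {0..1} \<times> {0..1}" "y \<in> {0..1} \<times> {0..1} \<times> {0..1}"
  shows "dist (Bmap P0 P1 x) (Bmap P0 P1 y) \<le> 3 * M * dist x y"
proof -
  obtain s t u s' t' u' :: real where xy: "x = (s, t, u)" "y = (s', t', u')"
    and box: "s' \<in> {0..1}" "t \<in> {0..1}" "t' \<in> {0..1}" "u \<in> {0..1}"
    using assms(2,3) by auto
  have "dist (Bmap P0 P1 x) (Bmap P0 P1 y) \<le> M * (\<bar>s - s'\<bar> + \<bar>t - t'\<bar> + \<bar>u - u'\<bar>)"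
    unfolding xy dist_norm Bmap_diff
    using frame_boundD(1,2)[OF assms(1) box(1,2,4)] frame_boundD(3)[OF assms(1) box(1,3,4)]
    by (rule norm_combination_le)
  also have "\<dots> \<le> M * (3 * dist x y)"
    unfolding xy using dist_triple_l1_bounds(2) frame_bound_nonneg[OF assms(1)]
    by (rule mult_left_mono)
  finally show ?thesis by simp
qed

lemma Bmap_co_lipschitz:
  assumes "\<forall>j\<le>3. zc (P0 j) = 0" "\<forall>j\<le>3. zc (P1 j) = 1" "Jmin P0 P1 > 0"
    and "frame_bound P0 P1 M"
    and "x \<in> {0..1} \<times> {0..1} \<times> {0..1}" "y \<in> {0..1} \<times> {0..1} \<times> {0..1}"
  shows "dist x y \<le> (4 * M * (1 + M) / Jmin P0 P1 + 1) * dist (Bmap P0 P1 x) (Bmap P0 P1 y)"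
proof -
  obtain s t u s' t' u' :: real where xy: "x = (s, t, u)" "y = (s', t', u')"
    and box: "s' \<in> {0..1}" "t \<in> {0..1}" "t' \<in> {0..1}" "u \<in> {0..1}"
    using assms(5,6) by auto
  have "dist x y \<le> \<bar>s - s'\<bar> + \<bar>t - t'\<bar> + \<bar>u - u'\<bar>"
    unfolding xy by (rule dist_triple_l1_bounds(1))
  also have "\<dots> \<le> (4 * M * (1 + M) / Jmin P0 P1 + 1) * dist (Bmap P0 P1 x) (Bmap P0 P1 y)"
    unfolding xy dist_norm Bmap_diff
    using zc_frame[OF assms(1,2)] frame_boundD(1,2)[OF assms(4) box(1,2,4)]
      frame_boundD(3)[OF assms(4) box(1,3,4)] assms(3) Jmin_le_pdet_vq_wq[OF box(4,1,2)]
    by (rule frame_coeffs_le)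
  finally show ?thesis .
qed

theorem lemma4p2:
  fixes P0 P1 :: "nat \<Rightarrow> real \<times> real \<times> real"
  assumes "\<forall>j\<le>3. zc (P0 j) = 0"
      and "\<forall>j\<le>3. zc (P1 j) = 1"
      and "Jmin P0 P1 > 0"
  shows "bi_lipschitz_on ({0..1} \<times> {0..1} \<times> {0..1}) (Bmap P0 P1)"
proof -
  obtain M where M: "frame_bound P0 P1 M" using frame_bound_exists by blast
  have "0 \<le> M" by (rule frame_bound_nonneg[OF M])
  then have "0 < 4 * M * (1 + M) / Jmin P0 P1 + 1"
    using assms(3) by (intro add_nonneg_pos divide_nonneg_pos) auto
  moreover have "0 \<le> 3 * M" using \<open>0 \<le> M\<close> by simp
  ultimately show ?thesis
    using Bmap_co_lipschitz[OF assms M] Bmap_lipschitz[OF M] by (rule bi_lipschitz_onI)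
qed

end
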